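(* Let $\mathcal A\in\mathbb C^{n_1\times n_2\times n_3}$ and let $\mathcal A^{-,\dagger}$ be a fixed element of $\mathcal A\{-,\dagger\}$. Then $$\mathcal A\{-,\dagger\}=\left\{\mathcal A^{-,\dagger}+(\mathcal I-\mathcal A^{-,\dagger}\mathcal A)\mathcal W\mathcal A\mathcal A^{-,\dagger}\ :\ \mathcal W\in\mathbb C^{n_2\times n_1\times n_3}\right\}.$$
   Context: Fix a nonsingular matrix $M\in\mathbb C^{n_3\times n_3}$. For $\mathcal C\in\mathbb C^{n_1\times n_2\times n_3}$ let $\widehat{\mathcal C}=\mathcal C\times_3M$, i.e. $\widehat{\mathcal C}_{ijk}=\sum_{l=1}^{n_3}M_{kl}\mathcal C_{ijl}$, and let $\widehat{\mathcal C}^{(i)}$ denote its $i$-th frontal slice. The M-product $\mathcal C\star_M\mathcal D$ of $\mathcal C\in\mathbb C^{n_1\times n_2\times n_3}$ and $\mathcal D\in\mathbb C^{n_2\times l\times n_3}$ is the unique tensor with $\widehat{\mathcal C\star_M\mathcal D}^{(i)}=\widehat{\mathcal C}^{(i)}\widehat{\mathcal D}^{(i)}$ for all $i\in[n_3]$. Juxtaposition of tensors denotes the M-product. The identity tensor $\mathcal I\in\mathbb C^{n\times n\times n_3}$ is defined by $\widehat{\mathcal I}^{(i)}=I_n$ for all $i$. The conjugate transpose $\mathcal A^*$ is defined by $\widehat{\mathcal A^*}^{(i)}=(\widehat{\mathcal A}^{(i)})^*$. The Moore–Penrose inverse $\mathcal A^\dagger$ is the unique $\mathcal W$ satisfying (1)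 $\mathcal A\mathcal W\mathcal A=\mathcal A$, (2) $\mathcal W\mathcal A\mathcal W=\mathcal W$, (3) $(\mathcal A\mathcal W)^*=\mathcal A\mathcal W$, (4) $(\mathcal W\mathcal A)^*=\mathcal W\mathcal A$. $\mathcal A\{1\}$ is the set of all $\mathcal W$ satisfying (1). The set of 1-MP inverses is $\mathcal A\{-,\dagger\}=\{\mathcal A^-\mathcal A\mathcal A^\dagger:\mathcal A^-\in\mathcal A\{1\}\}$. *)

theory Defs
  imports "HOL-Analysis.Analysis"
begin

text \<open>Third-order tensors in C^(m x n x k) are represented as complex^'k^'n^'m,
  entry (i,j,l) being A$i$j$l. The transform matrix M is complex^'k^'k.\<close>

definition mode3 :: "complex^'k^'k \<Rightarrow> complex^'k^'n^'m \<Rightarrow> complex^'k^'n^'m" where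
  "mode3 M A = (\<chi> i j k. \<Sum>l\<in>UNIV. M$k$l * A$i$j$l)"

definition slice :: "complex^'k^'n^'m \<Rightarrow> 'k \<Rightarrow> complex^'n^'m" where
  "slice A k = (\<chi> i j. A$i$j$k)"

definition of_slices :: "('k \<Rightarrow> complex^'n^'m) \<Rightarrow> complex^'k^'n^'m" where
  "of_slices S = (\<chi> i j k. (S k)$i$j)"

definition hat :: "complex^'k^'k \<Rightarrow> complex^'k^'n^'m \<Rightarrow> 'k \<Rightarrow> complex^'n^'m" where
  "hat M A k = slice (mode3 M A) k"

definition unhat :: "complex^'k^'k \<Rightarrow> ('k \<Rightarrow> complex^'n^'m) \<Rightarrow> complex^'k^'n^'m" where
  "unhat M S = mode3 (matrix_inv M) (of_slices S)"

definition mprod :: "complex^'k^'k \<Rightarrow> complex^'k^'n^'m \<Rightarrow> complex^'k^'p^'n \<Rightarrow> complex^'k^'p^'m" where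
  "mprod M C D = unhat M (\<lambda>k. hat M C k ** hat M D k)"

definition cmat_adj :: "complex^'n^'m \<Rightarrow> complex^'m^'n" where
  "cmat_adj X = (\<chi> i j. cnj (X$j$i))"

definition tconj :: "complex^'k^'k \<Rightarrow> complex^'k^'n^'m \<Rightarrow> complex^'k^'m^'n" where
  "tconj M A = unhat M (\<lambda>k. cmat_adj (hat M A k))"

definition tid :: "complex^'k^'k \<Rightarrow> complex^'k^'n^'n" where
  "tid M = unhat M (\<lambda>k. mat 1)"

definition is_MP :: "complex^'k^'k \<Rightarrow> complex^'k^'n^'m \<Rightarrow> complex^'k^'m^'n \<Rightarrow> bool" where
  "is_MP M A W \<longleftrightarrow> mprod M (mprod M A W) A = A \<and> mprod M (mprod M W A) W = W \<and>
     tconj M (mprod M A W) = mprod M A W \<and> tconj M (mprod M W A) = mprod M W A"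

definition tpinv :: "complex^'k^'k \<Rightarrow> complex^'k^'n^'m \<Rightarrow> complex^'k^'m^'n" where
  "tpinv M A = (THE W. is_MP M A W)"

definition inv1 :: "complex^'k^'k \<Rightarrow> complex^'k^'n^'m \<Rightarrow> (complex^'k^'m^'n) set" where
  "inv1 M A = {W. mprod M (mprod M A W) A = A}"

definition one_MP :: "complex^'k^'k \<Rightarrow> complex^'k^'n^'m \<Rightarrow> (complex^'k^'m^'n) set" where
  "one_MP M A = {mprod M (mprod M G A) (tpinv M A) | G. G \<in> inv1 M A}"

end

theory Submission
  imports Defs
begin

text \<open>The transform \<open>A \<mapsto> A \<times>\<^sub>3 M\<close> is a bijection that turns the M-product,
  conjugate transpose, identity, sums and differences into the corresponding slice-wise
  matrix operations. Hence the Moore-Penrose inverse of a tensor exists and is unique because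
  it does for each frontal slice, where it is given by the classical formula
  \<open>A\<^sup>* (A A\<^sup>*)\<^sup>- A (A\<^sup>* A)\<^sup>- A\<^sup>*\<close> for arbitrary inner inverses.
  Of \<open>A\<^sup>\<dagger>\<close> only \<open>A A\<^sup>\<dagger> A = A\<close> is then needed: the 1-MP inverses are
  exactly the \<open>Y\<close> with \<open>A Y A = A\<close> and \<open>Y A A\<^sup>\<dagger> = Y\<close>, any two of them satisfy
  \<open>A Y = A X = A A\<^sup>\<dagger>\<close>, which gives \<open>Y = X + (I - X A) Y A X\<close>, and conversely every
  tensor of that shape satisfies both equations.\<close>

section \<open>Moore-Penrose inverses of complex matrices\<close>

lemma matrix_add_rdistrib: "(B + C) ** (A::'a::semiring_1^_^_) = B ** A + C ** A"
  by (vector matrix_matrix_mult_def sum.distrib[symmetric] field_simps)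

lemma matrix_diff_ldistrib: "(A::'a::ring_1^_^_) ** (B - C) = A ** B - A ** C"
  by (vector matrix_matrix_mult_def sum_subtractf[symmetric] field_simps)

lemma matrix_diff_rdistrib: "(B - C) ** (A::'a::ring_1^_^_) = B ** A - C ** A"
  by (vector matrix_matrix_mult_def sum_subtractf[symmetric] field_simps)

lemma cmat_adj_adj [simp]: "cmat_adj (cmat_adj X) = X"
  by (simp add: cmat_adj_def vec_eq_iff)

lemma cmat_adj_mult: "cmat_adj (X ** Y) = cmat_adj Y ** cmat_adj X"
  by (simp add: cmat_adj_def vec_eq_iff matrix_matrix_mult_def mult.commute)

lemma cmat_adj_mult_self_eq_0:
  fixes Y :: "complex^'n^'m"
  assumes "cmat_adj Y ** Y = 0"
  shows "Y = 0"
proof -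
  have "(\<Sum>l\<in>UNIV. complex_of_real ((cmod (Y$l$j))\<^sup>2)) = 0" for j
  proof -
    have "(\<Sum>l\<in>UNIV. cnj (Y$l$j) * Y$l$j) = 0"
      using assms by (simp add: cmat_adj_def matrix_matrix_mult_def vec_eq_iff)
    then have "(\<Sum>l\<in>UNIV. Y$l$j * cnj (Y$l$j)) = 0"
      by (simp add: mult.commute)
    then show ?thesis
      by (simp only: complex_mult_cnj cmod_power2)
  qed
  then have "(\<Sum>l\<in>UNIV. (cmod (Y$l$j))\<^sup>2) = 0" for j
    by (metis of_real_eq_0_iff of_real_sum)
  then show ?thesis
    by (simp add: vec_eq_iff sum_nonneg_eq_0_iff)
qed

lemma gram_cancel_left:
  fixes P :: "complex^'n^'m"
  assumes "cmat_adj P ** P ** X = cmat_adj P ** P ** Y"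
  shows "P ** X = P ** Y"
proof -
  have "cmat_adj (P ** (X - Y)) ** (P ** (X - Y)) = cmat_adj (X - Y) ** (cmat_adj P ** P ** (X - Y))"
    by (simp add: cmat_adj_mult matrix_mul_assoc)
  also have "\<dots> = 0"
    using assms by (simp add: matrix_diff_ldistrib)
  finally have "P ** (X - Y) = 0"
    by (rule cmat_adj_mult_self_eq_0)
  then show ?thesis
    by (simp add: matrix_diff_ldistrib)
qed

lemma gram_cancel_right:
  fixes P :: "complex^'n^'m"
  assumes "X ** P ** cmat_adj P = Y ** P ** cmat_adj P"
  shows "X ** P = Y ** P"
proof -
  have "cmat_adj (cmat_adj P) ** cmat_adj P ** cmat_adj X = cmat_adj (cmat_adj P) ** cmat_adj P ** cmat_adj Y"
    using arg_cong[OF assms, of cmat_adj] by (simp only: cmat_adj_mult matrix_mul_assoc)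
  then have "cmat_adj P ** cmat_adj X = cmat_adj P ** cmat_adj Y"
    by (rule gram_cancel_left)
  then have "cmat_adj (cmat_adj P ** cmat_adj X) = cmat_adj (cmat_adj P ** cmat_adj Y)"
    by simp
  then show ?thesis
    by (simp add: cmat_adj_mult)
qed

lemma inner_inverse_exists:
  fixes A :: "complex^'n^'m"
  shows "\<exists>G. A ** G ** A = A"
proof -
  obtain g where "Vector_Spaces.linear (*s) (*s) g" "\<forall>v\<in>range ((*v) A). A *v g v = v"
    using vec.linear_exists_right_inverse_on[OF matrix_vector_mul_linear_gen[of A] vec.subspace_UNIV]
    by blast
  then have "(A ** matrix g ** A) *v x = A *v x" for x
    by (simp add: matrix_vector_mul_assoc[symmetric] matrix_works)
  then show ?thesis
    by (metis matrix_eq)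
qed

lemma hermitian_inner_inverse_adj:
  assumes "cmat_adj H = H" and "H ** G ** H = H"
  shows "H ** cmat_adj G ** H = H"
  using arg_cong[OF assms(2), of cmat_adj] assms(1) by (simp add: cmat_adj_mult matrix_mul_assoc)

lemma gram_inner_inverse_left:
  fixes A :: "complex^'n^'m"
  assumes "cmat_adj A ** A ** G ** (cmat_adj A ** A) = cmat_adj A ** A"
  shows "A ** G ** cmat_adj A ** A = A"
proof -
  have "cmat_adj A ** A ** (G ** cmat_adj A ** A) = cmat_adj A ** A ** mat 1"
    using assms by (simp add: matrix_mul_assoc)
  then have "A ** (G ** cmat_adj A ** A) = A ** mat 1"
    by (rule gram_cancel_left)
  then show ?thesis
    by (simp add: matrix_mul_assoc)
qed

lemma gram_inner_inverse_right:
  fixes A :: "complex^'n^'m"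
  assumes "A ** cmat_adj A ** G ** (A ** cmat_adj A) = A ** cmat_adj A"
  shows "A ** cmat_adj A ** G ** A = A"
proof -
  have "A ** cmat_adj A ** G ** A ** cmat_adj A = mat 1 ** A ** cmat_adj A"
    using assms by (simp add: matrix_mul_assoc)
  then have "A ** cmat_adj A ** G ** A = mat 1 ** A"
    by (rule gram_cancel_right)
  then show ?thesis
    by simp
qed

lemma gram_inner_inverse_sandwich_unique:
  fixes A :: "complex^'n^'m"
  assumes "cmat_adj A ** A ** G ** (cmat_adj A ** A) = cmat_adj A ** A"
    and "cmat_adj A ** A ** H ** (cmat_adj A ** A) = cmat_adj A ** A"
  shows "A ** G ** cmat_adj A = A ** H ** cmat_adj A"
proof -
  have "A ** G ** cmat_adj A ** cmat_adj (cmat_adj A) = A ** H ** cmat_adj A ** cmat_adj (cmat_adj A)"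
    using assms by (simp add: gram_inner_inverse_left)
  then show ?thesis
    by (rule gram_cancel_right)
qed

lemma gram_inner_inverse_sandwich_hermitian:
  fixes A :: "complex^'n^'m"
  assumes "cmat_adj A ** A ** G ** (cmat_adj A ** A) = cmat_adj A ** A"
  shows "cmat_adj (A ** G ** cmat_adj A) = A ** G ** cmat_adj A"
proof -
  have "cmat_adj A ** A ** cmat_adj G ** (cmat_adj A ** A) = cmat_adj A ** A"
    using hermitian_inner_inverse_adj[of "cmat_adj A ** A"] assms
    by (simp add: cmat_adj_mult)
  then show ?thesis
    using gram_inner_inverse_sandwich_unique[OF assms]
    by (simp add: cmat_adj_mult matrix_mul_assoc)
qed

definition is_matrix_MP :: "complex^'n^'m \<Rightarrow> complex^'m^'n \<Rightarrow> bool" where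
  "is_matrix_MP A W \<longleftrightarrow> A ** W ** A = A \<and> W ** A ** W = W \<and>
     cmat_adj (A ** W) = A ** W \<and> cmat_adj (W ** A) = W ** A"

lemma matrix_MP_exists:
  fixes A :: "complex^'n^'m"
  shows "\<exists>W. is_matrix_MP A W"
proof -
  obtain G where G: "A ** cmat_adj A ** G ** (A ** cmat_adj A) = A ** cmat_adj A"
    using inner_inverse_exists by blast
  obtain H where H: "cmat_adj A ** A ** H ** (cmat_adj A ** A) = cmat_adj A ** A"
    using inner_inverse_exists by blast
  have G': "cmat_adj (cmat_adj A) ** cmat_adj A ** G ** (cmat_adj (cmat_adj A) ** cmat_adj A)
      = cmat_adj (cmat_adj A) ** cmat_adj A"
    using G by simp
  have AG: "A ** (cmat_adj A ** G ** A) = A"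
    using gram_inner_inverse_right[OF G] by (simp add: matrix_mul_assoc)
  have AH: "A ** H ** cmat_adj A ** A = A"
    by (rule gram_inner_inverse_left[OF H])
  define W where "W = cmat_adj A ** G ** A ** H ** cmat_adj A"
  have AW: "A ** W = A ** H ** cmat_adj A"
    using AG by (simp add: W_def matrix_mul_assoc)
  have WA: "W ** A = cmat_adj A ** G ** A"
    using AH by (simp add: W_def matrix_mul_assoc[symmetric])
  have "A ** W ** A = A"
    using AH by (simp add: AW)
  moreover have "W ** A ** W = W"
  proof -
    have "W ** A ** W = cmat_adj A ** G ** (A ** (cmat_adj A ** G ** A)) ** H ** cmat_adj A"
      unfolding WA by (simp only: W_def matrix_mul_assoc)
    then show ?thesis
      by (simp only: AG W_def)
  qed
  moreover have "cmat_adj (A ** W) = A ** W"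
    unfolding AW by (rule gram_inner_inverse_sandwich_hermitian[OF H])
  moreover have "cmat_adj (W ** A) = W ** A"
    unfolding WA using gram_inner_inverse_sandwich_hermitian[OF G'] by simp
  ultimately show ?thesis
    unfolding is_matrix_MP_def by blast
qed

lemma matrix_MP_unique:
  fixes A :: "complex^'n^'m"
  assumes "is_matrix_MP A W1" and "is_matrix_MP A W2"
  shows "W1 = W2"
proof -
  have 1: "A ** W1 ** A = A" "W1 ** A ** W1 = W1" "cmat_adj (A ** W1) = A ** W1"
      "cmat_adj (W1 ** A) = W1 ** A"
    using assms(1) unfolding is_matrix_MP_def by auto
  have 2: "A ** W2 ** A = A" "W2 ** A ** W2 = W2" "cmat_adj (A ** W2) = A ** W2"
      "cmat_adj (W2 ** A) = W2 ** A"
    using assms(2) unfolding is_matrix_MP_def by auto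
  have "W1 = W1 ** cmat_adj (A ** W1)"
    using 1(2,3) by (simp add: matrix_mul_assoc)
  also have "\<dots> = W1 ** cmat_adj (A ** W2 ** A ** W1)"
    using 2(1) by simp
  also have "\<dots> = W1 ** A ** W1 ** A ** W2"
    using 1(3) 2(3) by (simp add: cmat_adj_mult matrix_mul_assoc)
  also have "\<dots> = W1 ** A ** W2"
    using 1(2) by simp
  also have "\<dots> = W1 ** A ** (W2 ** A ** W2)"
    using 2(2) by simp
  also have "\<dots> = cmat_adj (W2 ** (A ** W1 ** A)) ** W2"
    using 1(4) 2(4) by (simp add: cmat_adj_mult matrix_mul_assoc)
  also have "\<dots> = cmat_adj (W2 ** A) ** W2"
    using 1(1) by simp
  also have "\<dots> = W2"
    using 2(2,4) by simp
  finally show ?thesis .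
qed

section \<open>The transform and the M-product\<close>

lemma mode3_mode3: "mode3 M (mode3 N T) = mode3 (M ** N) T"
  unfolding mode3_def matrix_matrix_mult_def
  by (simp add: vec_eq_iff sum_distrib_left sum_distrib_right mult.assoc) (use sum.swap in fastforce)

lemma mode3_mat1: "mode3 (mat 1) T = T"
  by (simp add: mode3_def mat_def vec_eq_iff if_distrib if_distribR sum.delta cong: if_cong)

lemma invertible_matrix_inv_mult:
  assumes "invertible M"
  shows "M ** matrix_inv M = mat 1" and "matrix_inv M ** M = mat 1"
  using someI_ex[OF assms[unfolded invertible_def]] unfolding matrix_inv_def by auto

lemma slice_of_slices [simp]: "slice (of_slices S) = S"
  by (simp add: slice_def of_slices_def vec_eq_iff fun_eq_iff)

lemma of_slices_slice [simp]: "of_slices (slice T) = T"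
  by (simp add: slice_def of_slices_def vec_eq_iff fun_eq_iff)

lemma hat_eq_slice: "hat M A = slice (mode3 M A)"
  by (simp add: hat_def fun_eq_iff)

lemma hat_add [simp]: "hat M (A + B) k = hat M A k + hat M B k"
  by (simp add: hat_def slice_def mode3_def vec_eq_iff sum.distrib distrib_left)

lemma hat_diff [simp]: "hat M (A - B) k = hat M A k - hat M B k"
  by (simp add: hat_def slice_def mode3_def vec_eq_iff sum_subtractf right_diff_distrib)

locale mproduct =
  fixes M :: "complex^'k^'k"
  assumes invertible: "invertible M"
begin

abbreviation mmul (infixl "\<star>" 70) where "C \<star> D \<equiv> mprod M C D"

lemma hat_unhat [simp]: "hat M (unhat M S) = S"
  using invertible_matrix_inv_mult[OF invertible]
  by (simp add: hat_eq_slice unhat_def mode3_mode3 mode3_mat1)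

lemma unhat_hat [simp]: "unhat M (hat M A) = A"
  using invertible_matrix_inv_mult[OF invertible]
  by (simp add: hat_eq_slice unhat_def mode3_mode3 mode3_mat1)

lemma tensor_eq_iff_hat: "A = B \<longleftrightarrow> (\<forall>k. hat M A k = hat M B k)"
  by (metis unhat_hat ext)

lemma hat_mprod [simp]: "hat M (C \<star> D) k = hat M C k ** hat M D k"
  by (simp add: mprod_def)

lemma hat_tid [simp]: "hat M (tid M) k = mat 1"
  by (simp add: tid_def)

lemma hat_tconj [simp]: "hat M (tconj M A) k = cmat_adj (hat M A k)"
  by (simp add: tconj_def)

lemma is_MP_iff_slices: "is_MP M A W \<longleftrightarrow> (\<forall>k. is_matrix_MP (hat M A k) (hat M W k))"
  unfolding is_MP_def is_matrix_MP_def by (simp add: tensor_eq_iff_hat all_conj_distrib)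

lemma tpinv_is_MP: "is_MP M A (tpinv M A)"
  unfolding tpinv_def
proof (rule theI')
  define W where "W = unhat M (\<lambda>k. SOME W. is_matrix_MP (hat M A k) W)"
  have "is_MP M A W"
    unfolding is_MP_iff_slices W_def hat_unhat by (metis someI_ex matrix_MP_exists)
  moreover have "V = W" if "is_MP M A V" for V
    using that \<open>is_MP M A W\<close> matrix_MP_unique by (metis tensor_eq_iff_hat is_MP_iff_slices)
  ultimately show "\<exists>!W. is_MP M A W"
    by blast
qed

lemma mprod_assoc: "A \<star> (B \<star> C) = A \<star> B \<star> C"
  by (simp add: tensor_eq_iff_hat matrix_mul_assoc)

lemma mprod_add_left: "(A + B) \<star> C = A \<star> C + B \<star> C"
  by (simp add: tensor_eq_iff_hat matrix_add_rdistrib)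

lemma mprod_add_right: "C \<star> (A + B) = C \<star> A + C \<star> B"
  by (simp add: tensor_eq_iff_hat matrix_add_ldistrib)

lemma mprod_diff_left: "(A - B) \<star> C = A \<star> C - B \<star> C"
  by (simp add: tensor_eq_iff_hat matrix_diff_rdistrib)

lemma mprod_diff_right: "C \<star> (A - B) = C \<star> A - C \<star> B"
  by (simp add: tensor_eq_iff_hat matrix_diff_ldistrib)

lemma tid_mprod [simp]: "tid M \<star> C = C"
  by (simp add: tensor_eq_iff_hat)

lemma mprod_tid [simp]: "C \<star> tid M = C"
  by (simp add: tensor_eq_iff_hat)

lemmas mprod_distribs = mprod_add_left mprod_add_right mprod_diff_left mprod_diff_right

section \<open>1-MP inverses\<close>

lemma tpinv_inner_inverse: "A \<star> tpinv M A \<star> A = A"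
  using tpinv_is_MP unfolding is_MP_def by blast

lemma one_MP_iff: "Y \<in> one_MP M A \<longleftrightarrow> A \<star> Y \<star> A = A \<and> Y \<star> A \<star> tpinv M A = Y"
proof
  assume "Y \<in> one_MP M A"
  then obtain G where G: "A \<star> G \<star> A = A" and Y: "Y = G \<star> A \<star> tpinv M A"
    unfolding one_MP_def inv1_def by blast
  have "A \<star> Y \<star> A = A \<star> G \<star> (A \<star> tpinv M A \<star> A)"
    by (simp add: Y mprod_assoc)
  moreover have "Y \<star> A \<star> tpinv M A = G \<star> (A \<star> tpinv M A \<star> A) \<star> tpinv M A"
    by (simp add: Y mprod_assoc)
  ultimately show "A \<star> Y \<star> A = A \<and> Y \<star> A \<star> tpinv M A = Y"
    by (simp add: tpinv_inner_inverse G Y)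
next
  assume "A \<star> Y \<star> A = A \<and> Y \<star> A \<star> tpinv M A = Y"
  then show "Y \<in> one_MP M A"
    unfolding one_MP_def inv1_def by force
qed

lemma one_MP_mprod_left:
  assumes "Y \<in> one_MP M A"
  shows "A \<star> Y = A \<star> tpinv M A"
proof -
  have "A \<star> Y = A \<star> (Y \<star> A \<star> tpinv M A)"
    using assms by (simp add: one_MP_iff)
  also have "\<dots> = (A \<star> Y \<star> A) \<star> tpinv M A"
    by (simp add: mprod_assoc)
  also have "\<dots> = A \<star> tpinv M A"
    using assms by (simp add: one_MP_iff)
  finally show ?thesis .
qed

lemma one_MP_absorb:
  assumes "Y \<in> one_MP M A" and "Z \<in> one_MP M A"
  shows "Y \<star> A \<star> Z = Y"
proof -
  have "Y \<star> A \<star> Z = Y \<star> (A \<star> tpinv M A)"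
    using one_MP_mprod_left[OF assms(2)] by (simp flip: mprod_assoc)
  also have "\<dots> = Y"
    using assms(1) by (simp add: one_MP_iff mprod_assoc)
  finally show ?thesis .
qed

lemma one_MP_translate:
  assumes "X \<in> one_MP M A"
  shows "X + (tid M - X \<star> A) \<star> W \<star> A \<star> X \<in> one_MP M A"
proof -
  define D where "D = (tid M - X \<star> A) \<star> W \<star> A \<star> X"
  have AXA: "A \<star> X \<star> A = A" and XAT: "X \<star> A \<star> tpinv M A = X"
    using assms by (simp_all add: one_MP_iff)
  have "A \<star> D \<star> A = A \<star> W \<star> A \<star> X \<star> A - A \<star> X \<star> A \<star> W \<star> A \<star> X \<star> A"
    by (simp add: D_def mprod_distribs mprod_assoc)
  then have ADA: "A \<star> D \<star> A = 0"
    by (simp add: AXA)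
  have "D \<star> A \<star> tpinv M A = (tid M - X \<star> A) \<star> W \<star> A \<star> (X \<star> A \<star> tpinv M A)"
    by (simp add: D_def mprod_assoc)
  then have DAT: "D \<star> A \<star> tpinv M A = D"
    by (simp add: XAT D_def)
  show ?thesis
    unfolding D_def[symmetric] one_MP_iff using AXA XAT ADA DAT by (simp add: mprod_distribs)
qed

lemma one_MP_eq_translate:
  assumes "X \<in> one_MP M A" and "Y \<in> one_MP M A"
  shows "Y = X + (tid M - X \<star> A) \<star> Y \<star> A \<star> X"
proof -
  have "(tid M - X \<star> A) \<star> Y \<star> A \<star> X = Y \<star> A \<star> X - X \<star> (A \<star> Y \<star> A) \<star> X"
    by (simp add: mprod_diff_left mprod_assoc)
  also have "\<dots> = Y - X"
    using one_MP_absorb[OF assms(2,1)] one_MP_absorb[OF assms(1,1)] assms(2)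
    by (simp add: one_MP_iff)
  finally show ?thesis
    by simp
qed

end

theorem theorem3p2:
  fixes M :: "complex^'k^'k" and A :: "complex^'k^'n2^'n1" and X :: "complex^'k^'n1^'n2"
  assumes "invertible M"
    and "X \<in> one_MP M A"
  shows "one_MP M A =
    {X + mprod M (mprod M (mprod M (tid M - mprod M X A) W) A) X | W :: complex^'k^'n1^'n2. True}"
proof -
  interpret mproduct M
    by unfold_locales (fact assms(1))
  show ?thesis
    using one_MP_translate[OF assms(2)] one_MP_eq_translate[OF assms(2)] by blast
qed

end
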